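(* Let $I\subseteq\mathbb R$ be a closed bounded interval, let $n$ be a positive integer, and let $W\ge 0$, $D>0$. Let $\mathcal U$ be the set of functions $f$ assigning to each $\alpha\in I$ an interval $f(\alpha)=[\underline f(\alpha),\overline f(\alpha)]$ of length $W/n$ such that $\lvert\underline f(\alpha_0)-\underline f(\alpha_1)\rvert\le \tfrac12 D\lvert\alpha_0-\alpha_1\rvert$ for all $\alpha_0,\alpha_1\in I$. Suppose $f_1,\dots,f_n,g_1,\dots,g_n\in\mathcal U$ satisfy, for all $i,j\in\{1,\dots,n\}$, $$\underline{g_j}(\min I)-\overline{f_i}(\min I)\ge W,\qquad \underline{f_i}(\max I)-\overline{g_j}(\max I)\ge W.$$ For $f\in\mathcal U$ let $R_f:=\{(\alpha,v)\in I\times\mathbb R : v\in f(\alpha)\}$. Then $$\bigl\lvert R_{f_1}\cup\dots\cup R_{f_n}\cup R_{g_1}\cup\dots\cup R_{g_n}\bigr\rvert \le 2W\lvert I\rvert-\frac{W^2}{D},$$ where the left side is two-dimensional Lebesgue measure and $\lvert I\rvert$ is the length of $I$. *)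

theory Defs
  imports "HOL-Analysis.Analysis"
begin

text \<open>An element f of the class U is represented by its lower endpoint function
  fl; the interval is f(alpha) = [fl alpha, fl alpha + W/n].\<close>

definition in_U :: "real \<Rightarrow> real \<Rightarrow> nat \<Rightarrow> real \<Rightarrow> real \<Rightarrow> (real \<Rightarrow> real) \<Rightarrow> bool" where
  "in_U a b n W D fl \<longleftrightarrow>
     (\<forall>\<alpha>0\<in>{a..b}. \<forall>\<alpha>1\<in>{a..b}. \<bar>fl \<alpha>0 - fl \<alpha>1\<bar> \<le> D / 2 * \<bar>\<alpha>0 - \<alpha>1\<bar>)"

definition region :: "real \<Rightarrow> real \<Rightarrow> nat \<Rightarrow> real \<Rightarrow> (real \<Rightarrow> real) \<Rightarrow> (real \<times> real) set" where
  "region a b n W fl = {(\<alpha>, v). \<alpha> \<in> {a..b} \<and> fl \<alpha> \<le> v \<and> v \<le> fl \<alpha> + W / real n}"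

end

theory Submission
  imports Defs
begin

(* Write l = W / n. At each alpha, the n intervals [f_i(alpha), f_i(alpha) + l] can be pushed apart
   into n pairwise l-separated intervals [Y_k(alpha), Y_k(alpha) + l] that cover them, with each Y_k
   still (D/2)-Lipschitz in alpha; likewise Z_m for the g_j. The slice of the union at alpha thus has
   length at most 2W minus the sum of the overlaps max 0 (l - |Y_k - Z_m|). By the boundary
   conditions each D-Lipschitz function Y_k - Z_m passes from below -l to above l, so around a zero
   its overlap dominates a tent of height l and half-width l / D, whose integral is l^2 / D.
   Integrating the slices over I and summing over the n^2 pairs gives 2 W |I| - W^2 / D. *)

(* Stacking the intervals indexed by S downward from the highest one at spacing l puts the k-th
   from the bottom at Max (x ` S) - (card S - k) * l; spread takes the lowest such position. *)
definition spread :: "('a \<Rightarrow> real) \<Rightarrow> 'a set \<Rightarrow> real \<Rightarrow> nat \<Rightarrow> real" where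
  "spread x I l k =
     Min ((\<lambda>S. Max (x ` S) - (real (card S) - real k) * l) ` {S. S \<subseteq> I \<and> k \<le> card S})"

lemma spread_le:
  assumes "finite I" "S \<subseteq> I" "k \<le> card S"
  shows "spread x I l k \<le> Max (x ` S) - (real (card S) - real k) * l"
  unfolding spread_def using assms
  by (intro Min_le) (auto intro: finite_subset[of _ "Pow I"])

lemma spread_attained:
  assumes "finite I" "k \<le> card I"
  obtains S where "S \<subseteq> I" "k \<le> card S"
    "spread x I l k = Max (x ` S) - (real (card S) - real k) * l"
proof -
  have "spread x I l k \<in> (\<lambda>S. Max (x ` S) - (real (card S) - real k) * l) ` {S. S \<subseteq> I \<and> k \<le> card S}"
    unfolding spread_def using assms
    by (intro Min_in) (auto intro: finite_subset[of _ "Pow I"])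
  then show ?thesis using that by auto
qed

lemma spread_separated:
  assumes "finite I" "k < k'" "k' \<le> card I" "l \<ge> 0"
  shows "spread x I l k + l \<le> spread x I l k'"
proof -
  obtain S where S: "S \<subseteq> I" "k' \<le> card S"
    "spread x I l k' = Max (x ` S) - (real (card S) - real k') * l"
    using spread_attained[OF assms(1,3)] .
  have "spread x I l k \<le> Max (x ` S) - (real (card S) - real k) * l"
    using S assms by (intro spread_le) auto
  moreover have "l \<le> (real k' - real k) * l"
    using assms by (simp add: mult_le_cancel_right1)
  ultimately show ?thesis using S(3) by (simp add: algebra_simps)
qed

lemma spread_Suc_le:
  assumes I: "finite I" "i \<in> I" and v: "x i \<le> v" "v \<le> x i + l" and l: "l \<ge> 0"
    and k: "1 \<le> k" "k \<le> card I" and gap: "spread x I l k + l < v"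
  shows "Suc k \<le> card I \<and> spread x I l (Suc k) \<le> v"
proof -
  obtain S where S: "S \<subseteq> I" "k \<le> card S"
    and spread_k: "spread x I l k = Max (x ` S) - (real (card S) - real k) * l"
    using spread_attained[OF I(1) k(2)] .
  have finS: "finite S" and "S \<noteq> {}" using S I(1) k by (auto intro: finite_subset)
  have "\<exists>S'. S' \<subseteq> I \<and> Suc k \<le> card S' \<and> Max (x ` S') - (real (card S') - real (Suc k)) * l \<le> v"
  proof (cases "i \<in> S")
    case True
    have "x i \<le> Max (x ` S)" using True finS by auto
    then have "card S \<noteq> k" using spread_k gap v by auto
    then show ?thesis using S spread_k gap by (intro exI[of _ S]) (auto simp: algebra_simps)
  next
    case False
    have "Max (x ` insert i S) = max (x i) (Max (x ` S))"
      using finS \<open>S \<noteq> {}\<close> by simp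
    moreover have "card (insert i S) = Suc (card S)" using False finS by simp
    moreover have "0 \<le> (real (card S) - real k) * l" using S(2) l by simp
    ultimately show ?thesis using S I v gap spread_k
      by (intro exI[of _ "insert i S"]) (auto simp: algebra_simps)
  qed
  then obtain S' where S': "S' \<subseteq> I" "Suc k \<le> card S'"
    "Max (x ` S') - (real (card S') - real (Suc k)) * l \<le> v" by blast
  have "card S' \<le> card I" using S'(1) I(1) by (rule card_mono[rotated])
  then show ?thesis using S' spread_le[OF I(1) S'(1,2), of x l] by linarith
qed

lemma spread_covers:
  assumes "finite I" "i \<in> I" "x i \<le> v" "v \<le> x i + l" "l \<ge> 0"
  shows "\<exists>k\<in>{1..card I}. spread x I l k \<le> v \<and> v \<le> spread x I l k + l"
proof -
  define K where "K = {k\<in>{1..card I}. spread x I l k \<le> v}"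
  have "spread x I l 1 \<le> Max (x ` {i}) - (real (card {i}) - real 1) * l"
    using assms by (intro spread_le) auto
  moreover have "card I > 0" using assms card_gt_0_iff by blast
  ultimately have "1 \<in> K" using assms by (auto simp: K_def)
  moreover have "finite K" by (simp add: K_def)
  ultimately have "Max K \<in> K" and Max_ge: "\<And>k. k \<in> K \<Longrightarrow> k \<le> Max K"
    by (auto intro: Max_in)
  moreover have "v \<le> spread x I l (Max K) + l"
  proof (rule ccontr)
    assume "\<not> ?thesis"
    then have "Suc (Max K) \<in> K"
      using spread_Suc_le[of I i x v l "Max K"] assms \<open>Max K \<in> K\<close> by (auto simp: K_def)
    then show False using Max_ge by fastforce
  qed
  ultimately show ?thesis by (auto simp: K_def)
qed

lemma spread_le_bound:
  assumes "finite I" "1 \<le> k" "k \<le> card I" "l \<ge> 0" "\<And>i. i \<in> I \<Longrightarrow> x i \<le> c"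
  shows "spread x I l k \<le> c"
proof -
  have "spread x I l k \<le> Max (x ` I) - (real (card I) - real k) * l"
    using assms by (intro spread_le) auto
  also have "\<dots> \<le> Max (x ` I)" using assms by simp
  also have "\<dots> \<le> c" using assms by (subst Max_le_iff) auto
  finally show ?thesis .
qed

lemma spread_ge_bound:
  assumes "finite I" "1 \<le> k" "k \<le> card I" "l \<ge> 0" "\<And>i. i \<in> I \<Longrightarrow> c \<le> x i"
  shows "c - (real (card I) - 1) * l \<le> spread x I l k"
proof -
  obtain S where S: "S \<subseteq> I" "k \<le> card S"
    and spread_k: "spread x I l k = Max (x ` S) - (real (card S) - real k) * l"
    using spread_attained[OF assms(1,3)] .
  have "finite S" "S \<noteq> {}" using S assms by (auto intro: finite_subset)
  then have "c \<le> Max (x ` S)" using S assms by (auto simp: Max_ge_iff)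
  moreover have "card S \<le> card I" using S assms by (simp add: card_mono)
  then have "(real (card S) - real k) * l \<le> (real (card I) - 1) * l"
    using assms by (intro mult_right_mono) auto
  ultimately show ?thesis using spread_k by linarith
qed

lemma spread_le_spread_add:
  assumes "finite I" "1 \<le> k" "k \<le> card I" "\<And>i. i \<in> I \<Longrightarrow> x i \<le> y i + d"
  shows "spread x I l k \<le> spread y I l k + d"
proof -
  obtain S where S: "S \<subseteq> I" "k \<le> card S"
    and spread_k: "spread y I l k = Max (y ` S) - (real (card S) - real k) * l"
    using spread_attained[OF assms(1,3)] .
  have finS: "finite S" and "S \<noteq> {}" using S assms by (auto intro: finite_subset)
  have "x i \<le> Max (y ` S) + d" if "i \<in> S" for i
  proof -
    have "y i \<le> Max (y ` S)" using that finS by simp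
    then show ?thesis using that S assms(4)[of i] by auto
  qed
  then have "Max (x ` S) \<le> Max (y ` S) + d"
    using finS \<open>S \<noteq> {}\<close> by simp
  then show ?thesis using spread_le[OF assms(1) S, of x l] spread_k by linarith
qed

lemma lipschitz_on_spread:
  assumes "finite I" "1 \<le> k" "k \<le> card I" "\<And>i. i \<in> I \<Longrightarrow> B-lipschitz_on X (f i)"
  shows "B-lipschitz_on X (\<lambda>t. spread (\<lambda>i. f i t) I l k)"
proof (rule lipschitz_onI)
  fix s t assume st: "s \<in> X" "t \<in> X"
  have "f i s \<le> f i t + B * dist s t \<and> f i t \<le> f i s + B * dist s t" if "i \<in> I" for i
    using lipschitz_onD[OF assms(4)[OF that] st] by (simp add: dist_real_def abs_le_iff)
  then show "dist (spread (\<lambda>i. f i s) I l k) (spread (\<lambda>i. f i t) I l k) \<le> B * dist s t"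
    using spread_le_spread_add[OF assms(1-3), of "\<lambda>i. f i s" "\<lambda>i. f i t" "B * dist s t" l]
      spread_le_spread_add[OF assms(1-3), of "\<lambda>i. f i t" "\<lambda>i. f i s" "B * dist s t" l]
    by (simp add: dist_real_def abs_le_iff)
next
  have "I \<noteq> {}" using assms(2,3) by auto
  then show "0 \<le> B" using assms(4) lipschitz_on_nonneg by blast
qed

lemma spread_dist_ge:
  assumes "finite I" "k \<le> card I" "k' \<le> card I" "k \<noteq> k'" "l \<ge> 0"
  shows "l \<le> \<bar>spread x I l k - spread x I l k'\<bar>"
  using spread_separated[of I k k' l x] spread_separated[of I k' k l x] assms
  by (cases "k < k'") auto

lemma spread_gap:
  assumes "finite I" "l \<ge> 0" "1 \<le> k" "k \<le> card I" "1 \<le> m" "m \<le> card I"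
    and gap: "\<And>i j. i \<in> I \<Longrightarrow> j \<in> I \<Longrightarrow> real (card I) * l \<le> u j - (x i + l)"
  shows "l \<le> spread u I l m - spread x I l k"
proof -
  have "I \<noteq> {}" using assms by auto
  then have "Max (x ` I) \<in> x ` I" using assms(1) by (intro Max_in) auto
  then obtain i where i: "i \<in> I" "x i = Max (x ` I)" by auto
  have "spread x I l k \<le> x i"
    using assms i by (intro spread_le_bound) auto
  moreover have "x i + l + real (card I) * l \<le> u j" if "j \<in> I" for j
    using gap[OF i(1) that] by linarith
  then have "x i + l + real (card I) * l - (real (card I) - 1) * l \<le> spread u I l m"
    using assms by (intro spread_ge_bound) auto
  ultimately show ?thesis using assms(2) by (simp add: algebra_simps)
qed

lemma measure_interval_overlap:
  fixes u w l :: real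
  assumes "l \<ge> 0"
  shows "measure lborel {max u w<..<min (u + l) (w + l)} = max 0 (l - \<bar>u - w\<bar>)"
  using assms by (auto simp: max_def min_def abs_if)

lemma sum_overlaps_le_measure_Int:
  fixes y :: "'k \<Rightarrow> real" and z :: "'m \<Rightarrow> real"
  assumes "finite K" "finite M" "l \<ge> 0"
    and sep_y: "\<And>k k'. k \<in> K \<Longrightarrow> k' \<in> K \<Longrightarrow> k \<noteq> k' \<Longrightarrow> l \<le> \<bar>y k - y k'\<bar>"
    and sep_z: "\<And>m m'. m \<in> M \<Longrightarrow> m' \<in> M \<Longrightarrow> m \<noteq> m' \<Longrightarrow> l \<le> \<bar>z m - z m'\<bar>"
  shows "(\<Sum>k\<in>K. \<Sum>m\<in>M. max 0 (l - \<bar>y k - z m\<bar>))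
    \<le> measure lborel ((\<Union>k\<in>K. {y k..y k + l}) \<inter> (\<Union>m\<in>M. {z m..z m + l}))"
proof -
  define overlap where
    "overlap = (\<lambda>(k, m). {max (y k) (z m) <..< min (y k + l) (z m + l)})"
  have fmeasurable: "overlap p \<in> fmeasurable lborel" for p
    by (cases p) (simp only: overlap_def case_prod_conv box_real(1)[symmetric] fmeasurable_box)
  have disjoint: "pairwise (\<lambda>p q. disjnt (overlap p) (overlap q)) (K \<times> M)"
  proof (rule pairwiseI)
    fix p q assume that: "p \<in> K \<times> M" "q \<in> K \<times> M" "p \<noteq> q"
    obtain k m k' m' where pq: "p = (k, m)" "q = (k', m')" by (cases p, cases q) auto
    have "{u<..<u + l} \<inter> {w<..<w + l} = {}" if "l \<le> \<bar>u - w\<bar>" for u w :: real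
      using that by (auto simp: abs_le_iff)
    moreover have "l \<le> \<bar>y k - y k'\<bar> \<or> l \<le> \<bar>z m - z m'\<bar>" using pq that sep_y sep_z by auto
    moreover have "overlap p \<subseteq> {y k<..<y k + l} \<inter> {z m<..<z m + l}"
      and "overlap q \<subseteq> {y k'<..<y k' + l} \<inter> {z m'<..<z m' + l}"
      unfolding pq overlap_def by auto
    ultimately show "disjnt (overlap p) (overlap q)" unfolding disjnt_def by blast
  qed
  have "(\<Sum>k\<in>K. \<Sum>m\<in>M. max 0 (l - \<bar>y k - z m\<bar>)) = (\<Sum>(k, m)\<in>K \<times> M. max 0 (l - \<bar>y k - z m\<bar>))"
    by (rule sum.cartesian_product)
  also have "\<dots> = (\<Sum>p\<in>K \<times> M. measure lborel (overlap p))"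
    using assms(3) by (intro sum.cong) (auto simp: overlap_def measure_interval_overlap)
  also have "\<dots> = measure lborel (\<Union>p\<in>K \<times> M. overlap p)"
    by (rule measure_UNION'[symmetric]) (use assms(1,2) fmeasurable disjoint in auto)
  also have "\<dots> \<le> measure lborel ((\<Union>k\<in>K. {y k..y k + l}) \<inter> (\<Union>m\<in>M. {z m..z m + l}))"
  proof (rule measure_mono_fmeasurable)
    show "(\<Union>p\<in>K \<times> M. overlap p) \<subseteq> (\<Union>k\<in>K. {y k..y k + l}) \<inter> (\<Union>m\<in>M. {z m..z m + l})"
      unfolding overlap_def by force
    show "(\<Union>p\<in>K \<times> M. overlap p) \<in> sets lborel"
      using assms(1,2) fmeasurable by (intro sets.finite_UN fmeasurableD) auto
    show "(\<Union>k\<in>K. {y k..y k + l}) \<inter> (\<Union>m\<in>M. {z m..z m + l}) \<in> fmeasurable lborel"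
      using assms(1,2) by (intro fmeasurable_compact compact_Int compact_UN) auto
  qed
  finally show ?thesis .
qed

lemma measure_union_separated_intervals:
  fixes y :: "'k \<Rightarrow> real" and z :: "'m \<Rightarrow> real"
  assumes "finite K" "finite M" "l \<ge> 0"
    and sep_y: "\<And>k k'. k \<in> K \<Longrightarrow> k' \<in> K \<Longrightarrow> k \<noteq> k' \<Longrightarrow> l \<le> \<bar>y k - y k'\<bar>"
    and sep_z: "\<And>m m'. m \<in> M \<Longrightarrow> m' \<in> M \<Longrightarrow> m \<noteq> m' \<Longrightarrow> l \<le> \<bar>z m - z m'\<bar>"
  shows "measure lborel ((\<Union>k\<in>K. {y k..y k + l}) \<union> (\<Union>m\<in>M. {z m..z m + l}))
     \<le> (real (card K) + real (card M)) * l - (\<Sum>k\<in>K. \<Sum>m\<in>M. max 0 (l - \<bar>y k - z m\<bar>))"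
proof -
  define A where "A = (\<Union>k\<in>K. {y k..y k + l})"
  define B where "B = (\<Union>m\<in>M. {z m..z m + l})"
  have "measure lborel A \<le> (\<Sum>k\<in>K. measure lborel {y k..y k + l})"
    unfolding A_def using assms(1) by (intro measure_UNION_le) auto
  then have "measure lborel A \<le> real (card K) * l" using assms(3) by simp
  moreover have "measure lborel B \<le> (\<Sum>m\<in>M. measure lborel {z m..z m + l})"
    unfolding B_def using assms(2) by (intro measure_UNION_le) auto
  then have "measure lborel B \<le> real (card M) * l" using assms(3) by simp
  moreover have "measure lborel (A \<union> B) = measure lborel A + measure lborel B - measure lborel (A \<inter> B)"
    using assms(1,2) by (intro measure_Un3 fmeasurable_compact) (auto simp: A_def B_def)
  moreover have "(\<Sum>k\<in>K. \<Sum>m\<in>M. max 0 (l - \<bar>y k - z m\<bar>)) \<le> measure lborel (A \<inter> B)"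
    unfolding A_def B_def using assms by (rule sum_overlaps_le_measure_Int)
  ultimately show ?thesis unfolding A_def B_def distrib_right by linarith
qed

lemma measure_le_has_integral_slices:
  fixes S :: "(real \<times> real) set" and \<phi> :: "real \<Rightarrow> real"
  assumes S: "S \<in> sets lborel" "S \<subseteq> \<Omega> \<times> UNIV"
    and \<phi>: "(\<phi> has_integral I) \<Omega>" "\<And>x. x \<in> \<Omega> \<Longrightarrow> 0 \<le> \<phi> x"
    and slices: "\<And>x. x \<in> \<Omega> \<Longrightarrow> emeasure lborel (Pair x -` S) \<le> ennreal (\<phi> x)"
  shows "measure lborel S \<le> I"
proof -
  have "emeasure lborel S = (\<integral>\<^sup>+x. emeasure lborel (Pair x -` S) \<partial>lborel)"
    using S(1) lborel.emeasure_pair_measure_alt[of S lborel] by (simp flip: lborel_prod)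
  also have "\<dots> \<le> (\<integral>\<^sup>+x. ennreal (\<phi> x) * indicator \<Omega> x \<partial>lborel)"
  proof -
    have "Pair x -` S = {}" if "x \<notin> \<Omega>" for x using S(2) that by auto
    then show ?thesis using slices by (intro nn_integral_mono) (auto split: split_indicator)
  qed
  also have "\<dots> = ennreal I"
    by (rule nn_integral_has_integral_lebesgue'[OF \<phi>(2,1)])
  finally show ?thesis
    unfolding measure_def using has_integral_nonneg[OF \<phi>] by (intro enn2real_leI)
qed

lemma measure_le_separated_bands:
  fixes S :: "(real \<times> real) set" and y :: "'k \<Rightarrow> real \<Rightarrow> real" and z :: "'m \<Rightarrow> real \<Rightarrow> real"
    and W :: real and n :: nat
  defines "l \<equiv> W / real n"
  assumes "a \<le> b" "W \<ge> 0" "finite K" "finite M"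
    and cont: "\<And>k. k \<in> K \<Longrightarrow> continuous_on {a..b} (y k)"
      "\<And>m. m \<in> M \<Longrightarrow> continuous_on {a..b} (z m)"
    and sep_y: "\<And>x k k'. x \<in> {a..b} \<Longrightarrow> k \<in> K \<Longrightarrow> k' \<in> K \<Longrightarrow> k \<noteq> k' \<Longrightarrow> l \<le> \<bar>y k x - y k' x\<bar>"
    and sep_z: "\<And>x m m'. x \<in> {a..b} \<Longrightarrow> m \<in> M \<Longrightarrow> m' \<in> M \<Longrightarrow> m \<noteq> m' \<Longrightarrow> l \<le> \<bar>z m x - z m' x\<bar>"
    and S: "S \<in> sets lborel"
      "S \<subseteq> (\<Union>k\<in>K. region a b n W (y k)) \<union> (\<Union>m\<in>M. region a b n W (z m))"
  shows "measure lborel S \<le> (real (card K) + real (card M)) * l * (b - a)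
    - (\<Sum>k\<in>K. \<Sum>m\<in>M. integral {a..b} (\<lambda>x. max 0 (l - \<bar>y k x - z m x\<bar>)))"
proof (rule measure_le_has_integral_slices[OF S(1)])
  define \<phi> where "\<phi> x = (real (card K) + real (card M)) * l
    - (\<Sum>k\<in>K. \<Sum>m\<in>M. max 0 (l - \<bar>y k x - z m x\<bar>))" for x
  define slice where "slice x = (\<Union>k\<in>K. {y k x..y k x + l}) \<union> (\<Union>m\<in>M. {z m x..z m x + l})" for x
  have "l \<ge> 0" using assms(3) by (simp add: l_def)
  have slice_le: "measure lborel (slice x) \<le> \<phi> x" if "x \<in> {a..b}" for x
    unfolding slice_def \<phi>_def using assms(4,5) \<open>l \<ge> 0\<close> sep_y sep_z that
    by (intro measure_union_separated_intervals) auto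
  show "S \<subseteq> {a..b} \<times> UNIV" using S(2) by (auto simp: region_def)
  show "0 \<le> \<phi> x" if "x \<in> {a..b}" for x
    using slice_le[OF that] measure_nonneg[of lborel "slice x"] by linarith
  show "emeasure lborel (Pair x -` S) \<le> ennreal (\<phi> x)" if "x \<in> {a..b}" for x
  proof -
    have "compact (slice x)" using assms(4,5) by (auto simp: slice_def)
    moreover have "Pair x -` S \<subseteq> slice x" using S(2) by (fastforce simp: slice_def region_def l_def)
    ultimately have "emeasure lborel (Pair x -` S) \<le> measure lborel (slice x)"
      by (metis emeasure_eq_measure2 emeasure_mono fmeasurable_compact fmeasurableD)
    then show ?thesis using slice_le[OF that] by (meson ennreal_leI order_trans)
  qed
  have "((\<lambda>x. max 0 (l - \<bar>y k x - z m x\<bar>)) has_integral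
      integral {a..b} (\<lambda>x. max 0 (l - \<bar>y k x - z m x\<bar>))) {a..b}" if "k \<in> K" "m \<in> M" for k m
    using cont that by (intro integrable_integral integrable_continuous_interval continuous_intros)
  then show "(\<phi> has_integral ((real (card K) + real (card M)) * l * (b - a)
    - (\<Sum>k\<in>K. \<Sum>m\<in>M. integral {a..b} (\<lambda>x. max 0 (l - \<bar>y k x - z m x\<bar>))))) {a..b}"
    unfolding \<phi>_def using assms(2)
    by (intro has_integral_diff has_integral_sum assms(4,5))
      (auto simp: mult.commute intro: has_integral_const_real[THEN has_integral_eq_rhs])
qed

lemma has_integral_tent:
  fixes l D c r :: real
  assumes "r \<ge> 0"
  shows "((\<lambda>x. l - D * \<bar>x - c\<bar>) has_integral (2 * l * r - D * r\<^sup>2)) {c - r..c + r}"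
proof -
  have "((\<lambda>x. l - D * (c - x)) has_integral
      ((l * c + D * (c - c)\<^sup>2 / 2) - (l * (c - r) + D * (c - (c - r))\<^sup>2 / 2))) {c - r..c}"
    using assms by (intro fundamental_theorem_of_calculus)
      (auto intro!: derivative_eq_intros simp: power2_eq_square field_simps
        simp flip: has_real_derivative_iff_has_vector_derivative)
  also have "(l * c + D * (c - c)\<^sup>2 / 2) - (l * (c - r) + D * (c - (c - r))\<^sup>2 / 2) =
      l * r - D * r\<^sup>2 / 2"
    by (simp add: power2_eq_square algebra_simps)
  finally have left: "((\<lambda>x. l - D * \<bar>x - c\<bar>) has_integral (l * r - D * r\<^sup>2 / 2)) {c - r..c}"
    by (rule has_integral_eq[rotated]) auto
  have "((\<lambda>x. l - D * (x - c)) has_integral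
      ((l * (c + r) - D * (c + r - c)\<^sup>2 / 2) - (l * c - D * (c - c)\<^sup>2 / 2))) {c..c + r}"
    using assms by (intro fundamental_theorem_of_calculus)
      (auto intro!: derivative_eq_intros simp: power2_eq_square field_simps
        simp flip: has_real_derivative_iff_has_vector_derivative)
  also have "(l * (c + r) - D * (c + r - c)\<^sup>2 / 2) - (l * c - D * (c - c)\<^sup>2 / 2) =
      l * r - D * r\<^sup>2 / 2"
    by (simp add: power2_eq_square algebra_simps)
  finally have right: "((\<lambda>x. l - D * \<bar>x - c\<bar>) has_integral (l * r - D * r\<^sup>2 / 2)) {c..c + r}"
    by (rule has_integral_eq[rotated]) auto
  show ?thesis
    using has_integral_combine[OF _ _ left right] assms by (simp add: mult.assoc)
qed

lemma integral_overlap_ge: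
  fixes h :: "real \<Rightarrow> real"
  assumes lip: "D-lipschitz_on {a..b} h" and "a \<le> b" "D > 0" "l \<ge> 0"
    and ends: "h a \<le> - l" "l \<le> h b"
  shows "l\<^sup>2 / D \<le> integral {a..b} (\<lambda>x. max 0 (l - \<bar>h x\<bar>))"
proof -
  define F where "F = (\<lambda>x. max 0 (l - \<bar>h x\<bar>))"
  define r where "r = l / D"
  have lip': "\<bar>h x - h y\<bar> \<le> D * \<bar>x - y\<bar>" if "x \<in> {a..b}" "y \<in> {a..b}" for x y
    using lipschitz_onD[OF lip that] by (simp add: dist_real_def)
  have cont: "continuous_on {a..b} F"
    unfolding F_def using lipschitz_on_continuous_on[OF lip] by (intro continuous_intros)
  obtain c where c: "a \<le> c" "c \<le> b" "h c = 0"
    using IVT'[of h a 0 b] ends assms(2,4) lipschitz_on_continuous_on[OF lip] by auto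
  have "l \<le> D * (c - a)" "l \<le> D * (b - c)"
    using lip'[of a c] lip'[of b c] c ends assms(2) by auto
  then have sub: "{c - r..c + r} \<subseteq> {a..b}"
    using assms(3) by (auto simp: r_def field_simps)
  have tent_le: "l - D * \<bar>x - c\<bar> \<le> F x" if "x \<in> {c - r..c + r}" for x
    using lip'[of x c] sub that c by (auto simp: F_def)
  have "l\<^sup>2 / D = 2 * l * r - D * r\<^sup>2"
    using assms(3) by (simp add: r_def power2_eq_square field_simps)
  also have "\<dots> \<le> integral {c - r..c + r} F"
    using assms(3,4) sub cont
    by (intro has_integral_le[OF has_integral_tent integrable_integral] tent_le
        integrable_continuous_interval continuous_on_subset[OF cont]) (auto simp: r_def)
  also have "\<dots> \<le> integral {a..b} F"
    using sub cont by (intro integral_subset_le integrable_continuous_interval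
        continuous_on_subset[OF cont]) (auto simp: F_def)
  finally show ?thesis by (simp add: F_def)
qed

lemma measure_le_crossing_bands:
  fixes S :: "(real \<times> real) set" and y :: "'k \<Rightarrow> real \<Rightarrow> real" and z :: "'m \<Rightarrow> real \<Rightarrow> real"
    and W D :: real and n :: nat
  defines "l \<equiv> W / real n"
  assumes "a \<le> b" "W \<ge> 0" "D > 0" "finite K" "finite M"
    and lip: "\<And>k. k \<in> K \<Longrightarrow> (D / 2)-lipschitz_on {a..b} (y k)"
      "\<And>m. m \<in> M \<Longrightarrow> (D / 2)-lipschitz_on {a..b} (z m)"
    and sep_y: "\<And>x k k'. x \<in> {a..b} \<Longrightarrow> k \<in> K \<Longrightarrow> k' \<in> K \<Longrightarrow> k \<noteq> k' \<Longrightarrow> l \<le> \<bar>y k x - y k' x\<bar>"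
    and sep_z: "\<And>x m m'. x \<in> {a..b} \<Longrightarrow> m \<in> M \<Longrightarrow> m' \<in> M \<Longrightarrow> m \<noteq> m' \<Longrightarrow> l \<le> \<bar>z m x - z m' x\<bar>"
    and cross: "\<And>k m. k \<in> K \<Longrightarrow> m \<in> M \<Longrightarrow> l \<le> z m a - y k a"
      "\<And>k m. k \<in> K \<Longrightarrow> m \<in> M \<Longrightarrow> l \<le> y k b - z m b"
    and S: "S \<in> sets lborel"
      "S \<subseteq> (\<Union>k\<in>K. region a b n W (y k)) \<union> (\<Union>m\<in>M. region a b n W (z m))"
  shows "measure lborel S \<le> (real (card K) + real (card M)) * l * (b - a)
    - real (card K) * real (card M) * l\<^sup>2 / D"
proof -
  have "l \<ge> 0" using assms(3) by (simp add: l_def)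
  have "real (card K) * real (card M) * l\<^sup>2 / D = (\<Sum>k\<in>K. \<Sum>m\<in>M. l\<^sup>2 / D)" by simp
  also have "\<dots> \<le> (\<Sum>k\<in>K. \<Sum>m\<in>M. integral {a..b} (\<lambda>x. max 0 (l - \<bar>y k x - z m x\<bar>)))"
  proof (intro sum_mono integral_overlap_ge)
    fix k m assume "k \<in> K" "m \<in> M"
    then show "D-lipschitz_on {a..b} (\<lambda>x. y k x - z m x)"
      using lipschitz_on_diff[OF lip] by fastforce
    show "y k a - z m a \<le> - l" "l \<le> y k b - z m b"
      using cross \<open>k \<in> K\<close> \<open>m \<in> M\<close> by force+
  qed (use assms(2,4) \<open>l \<ge> 0\<close> in auto)
  moreover have "measure lborel S \<le> (real (card K) + real (card M)) * l * (b - a)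
    - (\<Sum>k\<in>K. \<Sum>m\<in>M. integral {a..b} (\<lambda>x. max 0 (l - \<bar>y k x - z m x\<bar>)))"
    unfolding l_def using assms(2,3,5,6) sep_y sep_z S lipschitz_on_continuous_on[OF lip(1)]
      lipschitz_on_continuous_on[OF lip(2)]
    by (intro measure_le_separated_bands) (auto simp: l_def)
  ultimately show ?thesis by linarith
qed

lemma in_U_imp_lipschitz_on:
  assumes "in_U a b n W D fl" "D \<ge> 0"
  shows "(D / 2)-lipschitz_on {a..b} fl"
  using assms by (auto simp: in_U_def lipschitz_on_def dist_real_def)

lemma closed_region:
  assumes "continuous_on {a..b} fl"
  shows "closed (region a b n W fl)"
proof -
  have "region a b n W fl = ({a..b} \<times> UNIV) \<inter> (\<lambda>p. snd p - fl (fst p)) -` {0..W / real n}"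
    by (auto simp: region_def)
  moreover have "continuous_on ({a..b} \<times> UNIV) (\<lambda>p. snd p - fl (fst p))"
    by (intro continuous_intros continuous_on_compose2[OF assms]) auto
  ultimately show ?thesis
    by (metis closed_Times closed_UNIV closed_atLeastAtMost continuous_closed_preimage)
qed

lemma region_union_subset_spread:
  assumes "finite I" "W \<ge> 0"
  shows "(\<Union>i\<in>I. region a b n W (f i))
    \<subseteq> (\<Union>k\<in>{1..card I}. region a b n W (\<lambda>x. spread (\<lambda>i. f i x) I (W / real n) k))"
proof
  fix p assume "p \<in> (\<Union>i\<in>I. region a b n W (f i))"
  then obtain i where i: "i \<in> I" "p \<in> region a b n W (f i)" by blast
  obtain x v where p: "p = (x, v)" by fastforce
  show "p \<in> (\<Union>k\<in>{1..card I}. region a b n W (\<lambda>x. spread (\<lambda>i. f i x) I (W / real n) k))"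
    using i spread_covers[OF assms(1), of i "\<lambda>i. f i x" v "W / real n"] assms(2)
    unfolding p by (auto simp: region_def)
qed

theorem lemma6:
  fixes a b W D :: real and n :: nat and f g :: "nat \<Rightarrow> real \<Rightarrow> real"
  assumes "a \<le> b" and "n \<ge> 1" and "W \<ge> 0" and "D > 0"
    and "\<And>i. i \<in> {1..n} \<Longrightarrow> in_U a b n W D (f i)"
    and "\<And>j. j \<in> {1..n} \<Longrightarrow> in_U a b n W D (g j)"
    and "\<And>i j. i \<in> {1..n} \<Longrightarrow> j \<in> {1..n} \<Longrightarrow> g j a - (f i a + W / real n) \<ge> W"
    and "\<And>i j. i \<in> {1..n} \<Longrightarrow> j \<in> {1..n} \<Longrightarrow> f i b - (g j b + W / real n) \<ge> W"
  shows "measure lborel ((\<Union>i\<in>{1..n}. region a b n W (f i)) \<union> (\<Union>j\<in>{1..n}. region a b n W (g j)))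
           \<le> 2 * W * (b - a) - W\<^sup>2 / D"
proof -
  define l where "l = W / real n"
  have "n \<noteq> 0" "l \<ge> 0" using assms(2,3) by (auto simp: l_def)
  define Y where "Y = (\<lambda>k x. spread (\<lambda>i. f i x) {1..n} l k)"
  define Z where "Z = (\<lambda>k x. spread (\<lambda>j. g j x) {1..n} l k)"
  have lip_YZ: "(D / 2)-lipschitz_on {a..b} (Y k)" "(D / 2)-lipschitz_on {a..b} (Z k)"
    if "k \<in> {1..n}" for k
    unfolding Y_def Z_def using that assms(4-6) in_U_imp_lipschitz_on[of a b n W D]
    by (auto intro!: lipschitz_on_spread)
  have "real (card {1..n}) * l \<le> g j a - (f i a + l)" "real (card {1..n}) * l \<le> f i b - (g j b + l)"
    if "i \<in> {1..n}" "j \<in> {1..n}" for i j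
    using assms(7,8)[OF that] \<open>n \<noteq> 0\<close> by (simp_all add: l_def)
  then have cross: "l \<le> Z m a - Y k a" "l \<le> Y k b - Z m b" if "k \<in> {1..n}" "m \<in> {1..n}" for k m
    using that \<open>l \<ge> 0\<close> unfolding Y_def Z_def by (auto intro!: spread_gap)
  have sep: "l \<le> \<bar>spread x {1..n} l k - spread x {1..n} l k'\<bar>"
    if "k \<in> {1..n}" "k' \<in> {1..n}" "k \<noteq> k'" for x k k'
    using that \<open>l \<ge> 0\<close> by (intro spread_dist_ge) auto
  define S where "S = (\<Union>i\<in>{1..n}. region a b n W (f i)) \<union> (\<Union>j\<in>{1..n}. region a b n W (g j))"
  have "closed S"
    unfolding S_def using assms(4-6) in_U_imp_lipschitz_on[of a b n W D]
    by (intro closed_Un closed_UN ballI closed_region lipschitz_on_continuous_on[of "D / 2"]) auto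
  moreover have "S \<subseteq> (\<Union>k\<in>{1..n}. region a b n W (Y k)) \<union> (\<Union>m\<in>{1..n}. region a b n W (Z m))"
    using region_union_subset_spread[of "{1..n}" W a b n f]
      region_union_subset_spread[of "{1..n}" W a b n g] assms(3)
    unfolding S_def Y_def Z_def l_def by auto
  ultimately have "measure lborel S \<le> (real (card {1..n}) + real (card {1..n})) * (W / real n) * (b - a)
      - real (card {1..n}) * real (card {1..n}) * (W / real n)\<^sup>2 / D"
    using assms(1,3,4) lip_YZ cross sep
    by (intro measure_le_crossing_bands) (auto simp: Y_def Z_def l_def)
  also have "\<dots> = 2 * W * (b - a) - W\<^sup>2 / D"
    using \<open>n \<noteq> 0\<close> by (simp add: power2_eq_square field_simps)
  finally show ?thesis unfolding S_def .
qed

end
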